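(* Let $X\in\mathbb{R}^{n\times p}$ be a fixed matrix with rows $X_1^\top,\dots,X_n^\top$, let $\beta\in\mathbb{R}^p$, let $\epsilon$ be a random vector in $\mathbb{R}^n$, and let $D\subset\mathbb{R}^p$. Let $G:\mathbb{R}^n\to\mathbb{R}$ be a function, and let $\psi=(\psi_1,\dots,\psi_n)$, $\varphi=(\varphi_1,\dots,\varphi_n)$ with each $\psi_i,\varphi_i:\mathbb{R}\to\mathbb{R}$. Fix $q\in(0,1)$ and $c_0>0$. Suppose: (i) there is $c_1>0$ such that $$\Pr\Big\{|\langle \epsilon,\varphi(Xv)-\varphi(X\beta)\rangle|\le c_1\sqrt{n}\,\|v-\beta\|_1 \text{ for all } v\in D\Big\}\ge 1-c_0q;$$ (ii) there is $c_2>0$ such that $G(\psi(Xv)-\psi(X\beta))\ge c_2 n\|v-\beta\|_2^2$ for all $v\in D$. Let $c_r=2c_1\sqrt{n}$ and suppose $\hat\beta\in D$ is a random variable that always satisfies $$G(\psi(X\hat\beta)-\psi(X\beta))\le 2|\langle\epsilon,\varphi(X\hat\beta)-\varphi(X\beta)\rangle| - c_r(\|\hat\beta\|_1-\|\beta\|_1).$$ Then, with $\kappa_r=4c_1/c_2$, $$\Pr\Big\{\|\hat\beta-\beta\|_2\le \kappa_r\sqrt{|\mathrm{spt}(\beta)|/n}\Big\}\ge 1-c_0q.$$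
   Context: For functions $g_1,\dots,g_n:\mathbb{R}\to\mathbb{R}$, $g=(g_1,\dots,g_n)$ and $x\in\mathbb{R}^n$, write $g(x)=(g_1(x_1),\dots,g_n(x_n))^\top$. For $v\in\mathbb{R}^p$, $\|v\|_a$ is the $\ell_a$-norm, and $\mathrm{spt}(v)=\{i: v_i\neq 0\}$ is the support of $v$, with $|\mathrm{spt}(v)|$ its cardinality. $\langle\cdot,\cdot\rangle$ is the Euclidean inner product on $\mathbb{R}^n$. *)

theory Defs
  imports "HOL-Probability.Probability"
begin

definition compapp :: "('n::finite \<Rightarrow> real \<Rightarrow> real) \<Rightarrow> real^'n \<Rightarrow> real^'n" where
  "compapp g x = (\<chi> i. g i (x $ i))"

definition l1norm :: "real^'n::finite \<Rightarrow> real" where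
  "l1norm v = (\<Sum>i\<in>UNIV. \<bar>v $ i\<bar>)"

definition spt :: "real^'n::finite \<Rightarrow> 'n set" where
  "spt v = {i. v $ i \<noteq> 0}"

end

theory Submission
  imports Defs
begin

text \<open>On the event of (i), the basic inequality and (ii) give
  \<open>c2 n \<parallel>d\<parallel>\<^sub>2\<^sup>2 \<le> c_r (\<parallel>d\<parallel>\<^sub>1 - (\<parallel>\<beta>hat\<parallel>\<^sub>1 - \<parallel>\<beta>\<parallel>\<^sub>1))\<close> for \<open>d = \<beta>hat - \<beta>\<close>. Off the support of \<open>\<beta>\<close>
  the bracket cancels, and on it each coordinate contributes at most \<open>2\<bar>d\<^sub>i\<bar>\<close>, so by
  Cauchy-Schwarz the bracket is at most \<open>2 \<surd>|spt \<beta>| \<parallel>d\<parallel>\<^sub>2\<close>; dividing by \<open>\<parallel>d\<parallel>\<^sub>2\<close> gives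
  the bound. Hence the event of (i) is contained in the event of the conclusion.\<close>

lemma l1norm_diff_minus_l1norm_diff_le:
  fixes b a :: "real^'p::finite"
  shows "l1norm (b - a) - (l1norm b - l1norm a) \<le> 2 * (\<Sum>i\<in>spt a. \<bar>(b - a) $ i\<bar>)"
proof -
  have "l1norm (b - a) - (l1norm b - l1norm a) = (\<Sum>i\<in>UNIV. \<bar>(b - a) $ i\<bar> - \<bar>b $ i\<bar> + \<bar>a $ i\<bar>)"
    unfolding l1norm_def by (simp add: sum_subtractf sum.distrib)
  also have "\<dots> \<le> (\<Sum>i\<in>UNIV. if i \<in> spt a then 2 * \<bar>(b - a) $ i\<bar> else 0)"
    by (rule sum_mono) (auto simp: spt_def)
  also have "\<dots> = 2 * (\<Sum>i\<in>spt a. \<bar>(b - a) $ i\<bar>)"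
    by (simp add: sum.If_cases sum_distrib_left)
  finally show ?thesis .
qed

lemma sum_abs_component_le_sqrt_card_norm:
  fixes d :: "real^'p::finite"
  shows "(\<Sum>i\<in>S. \<bar>d $ i\<bar>) \<le> sqrt (real (card S)) * norm d"
proof -
  have "(\<Sum>i\<in>S. \<bar>d $ i\<bar>) = (\<Sum>i\<in>S. \<bar>d $ i\<bar> * \<bar>1\<bar>)" by simp
  also have "\<dots> \<le> L2_set (\<lambda>i. d $ i) S * L2_set (\<lambda>i. 1::real) S"
    by (rule L2_set_mult_ineq)
  also have "L2_set (\<lambda>i. 1::real) S = sqrt (real (card S))"
    by (simp add: L2_set_constant)
  also have "L2_set (\<lambda>i. d $ i) S \<le> norm d"
  proof -
    have "(\<Sum>i\<in>S. (d $ i)\<^sup>2) \<le> (\<Sum>i\<in>UNIV. (d $ i)\<^sup>2)"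
      by (rule sum_mono2) auto
    then show ?thesis unfolding L2_set_def norm_vec_def by simp
  qed
  finally show ?thesis by (simp add: mult.commute mult_right_mono)
qed

lemma l1norm_diff_minus_l1norm_diff_le_sqrt_card_spt:
  fixes b a :: "real^'p::finite"
  shows "l1norm (b - a) - (l1norm b - l1norm a) \<le> 2 * sqrt (real (card (spt a))) * norm (b - a)"
  using l1norm_diff_minus_l1norm_diff_le[of b a]
    sum_abs_component_le_sqrt_card_norm[of "b - a" "spt a"]
  by linarith

lemma le_divide_of_mult_square_le:
  fixes a b x :: real
  assumes "0 < a" "0 \<le> b" "0 \<le> x" "a * x\<^sup>2 \<le> b * x"
  shows "x \<le> b / a"
proof (cases "x = 0")
  case True
  with assms show ?thesis
    by simp
next
  case False
  with assms have "a * x \<le> b"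
    by (simp add: power2_eq_square mult.assoc[symmetric])
  with assms(1) show ?thesis
    by (simp add: pos_le_divide_eq mult.commute)
qed

lemma norm_diff_le_of_basic_inequality:
  fixes b \<beta> :: "real^'p::finite" and n c1 c2 e g :: real
  assumes "0 < n" "0 \<le> c1" "0 < c2"
    and noise: "\<bar>e\<bar> \<le> c1 * sqrt n * l1norm (b - \<beta>)"
    and curvature: "c2 * n * (norm (b - \<beta>))\<^sup>2 \<le> g"
    and basic: "g \<le> 2 * \<bar>e\<bar> - 2 * c1 * sqrt n * (l1norm b - l1norm \<beta>)"
  shows "norm (b - \<beta>) \<le> 4 * c1 / c2 * sqrt (real (card (spt \<beta>)) / n)"
proof -
  let ?s = "real (card (spt \<beta>))"
  have "c2 * n * (norm (b - \<beta>))\<^sup>2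
        \<le> 2 * c1 * sqrt n * (l1norm (b - \<beta>) - (l1norm b - l1norm \<beta>))"
    using noise curvature basic by (simp add: algebra_simps)
  also have "\<dots> \<le> 2 * c1 * sqrt n * (2 * sqrt ?s * norm (b - \<beta>))"
    using assms(1,2) l1norm_diff_minus_l1norm_diff_le_sqrt_card_spt
    by (intro mult_left_mono) auto
  finally have "norm (b - \<beta>) \<le> 4 * c1 * sqrt n * sqrt ?s / (c2 * n)"
    using assms(1-3) by (intro le_divide_of_mult_square_le) (auto simp: algebra_simps)
  also have "\<dots> = 4 * c1 / c2 * sqrt (?s / n)"
  proof -
    have "n = sqrt n * sqrt n"
      using assms(1) by simp
    then show ?thesis
      using assms(1,3) by (simp add: real_sqrt_divide field_simps)
  qed
  finally show ?thesis .
qed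

theorem proposition2p1:
  fixes M :: "'w measure"
    and X :: "real^'p::finite^'n::finite"
    and \<beta> :: "real^'p"
    and \<epsilon> :: "'w \<Rightarrow> real^'n"
    and D :: "(real^'p) set"
    and G :: "real^'n \<Rightarrow> real"
    and \<psi> \<phi> :: "'n \<Rightarrow> real \<Rightarrow> real"
    and q c0 c1 c2 :: real
    and \<beta>hat :: "'w \<Rightarrow> real^'p"
  assumes "prob_space M"
    and "\<epsilon> \<in> borel_measurable M"
    and "0 < q" "q < 1" "0 < c0"
    and "0 < c1"
    and "{\<omega>\<in>space M. \<forall>v\<in>D. \<bar>\<epsilon> \<omega> \<bullet> (compapp \<phi> (X *v v) - compapp \<phi> (X *v \<beta>))\<bar>
            \<le> c1 * sqrt (real CARD('n)) * l1norm (v - \<beta>)} \<in> sets M"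
    and "measure M {\<omega>\<in>space M. \<forall>v\<in>D. \<bar>\<epsilon> \<omega> \<bullet> (compapp \<phi> (X *v v) - compapp \<phi> (X *v \<beta>))\<bar>
            \<le> c1 * sqrt (real CARD('n)) * l1norm (v - \<beta>)} \<ge> 1 - c0 * q"
    and "0 < c2"
    and "\<forall>v\<in>D. G (compapp \<psi> (X *v v) - compapp \<psi> (X *v \<beta>)) \<ge> c2 * real CARD('n) * (norm (v - \<beta>))\<^sup>2"
    and "\<beta>hat \<in> borel_measurable M"
    and "\<forall>\<omega>\<in>space M. \<beta>hat \<omega> \<in> D"
    and "\<forall>\<omega>\<in>space M. G (compapp \<psi> (X *v \<beta>hat \<omega>) - compapp \<psi> (X *v \<beta>))
            \<le> 2 * \<bar>\<epsilon> \<omega> \<bullet> (compapp \<phi> (X *v \<beta>hat \<omega>) - compapp \<phi> (X *v \<beta>))\<bar>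
              - (2 * c1 * sqrt (real CARD('n))) * (l1norm (\<beta>hat \<omega>) - l1norm \<beta>)"
  shows "measure M {\<omega>\<in>space M. norm (\<beta>hat \<omega> - \<beta>)
            \<le> (4 * c1 / c2) * sqrt (real (card (spt \<beta>)) / real CARD('n))} \<ge> 1 - c0 * q"
proof -
  interpret prob_space M by fact
  let ?E = "{\<omega>\<in>space M. \<forall>v\<in>D. \<bar>\<epsilon> \<omega> \<bullet> (compapp \<phi> (X *v v) - compapp \<phi> (X *v \<beta>))\<bar>
            \<le> c1 * sqrt (real CARD('n)) * l1norm (v - \<beta>)}"
  let ?T = "{\<omega>\<in>space M. norm (\<beta>hat \<omega> - \<beta>)
            \<le> (4 * c1 / c2) * sqrt (real (card (spt \<beta>)) / real CARD('n))}"
  have "?E \<subseteq> ?T"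
  proof
    fix \<omega> assume "\<omega> \<in> ?E"
    with assms(6,9,10,12,13) show "\<omega> \<in> ?T"
      using norm_diff_le_of_basic_inequality[of "real CARD('n)" c1 c2
          "\<epsilon> \<omega> \<bullet> (compapp \<phi> (X *v \<beta>hat \<omega>) - compapp \<phi> (X *v \<beta>))" "\<beta>hat \<omega>" \<beta>
          "G (compapp \<psi> (X *v \<beta>hat \<omega>) - compapp \<psi> (X *v \<beta>))"]
      by auto
  qed
  moreover have "?T \<in> sets M"
    using assms(11) by measurable
  ultimately have "measure M ?E \<le> measure M ?T"
    by (rule finite_measure_mono)
  with assms(8) show ?thesis by linarith
qed

end
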